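(* Let $(S,* )$ be a finite cycle set of class $d$ with permutation group $\mathcal G$. Then $d$ and $|\mathcal G|$ have the same set of prime divisors. In particular, $d$ is a prime power if and only if $|\mathcal G|$ is a prime power.
   Context: A cycle set is a set $S$ with a binary operation $*$ such that each $t\mapsto s*t$ is bijective and $(s*t)*(s*u)=(t*s)*(t*u)$ for all $s,t,u$. Write $S=\{s_1,\dots,s_n\}$, let $\psi(s)\in\mathfrak S_n$ satisfy $s_i*s_j=s_{\psi(s_i)(j)}$, and $\mathcal G=\langle\psi(s_1),\dots,\psi(s_n)\rangle\le\mathfrak S_n$. With $T(s)=s*s$ and $\psi_k(s)=\psi(T^{k-1}(s))\circ\cdots\circ\psi(s)$, the class $d$ is the least integer $d\ge1$ with $\psi_d(s)=\mathrm{id}$ for all $s\in S$. *)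

theory Defs
  imports "HOL-Algebra.Generated_Groups" "HOL-Algebra.Bij" "HOL-Number_Theory.Prime_Powers"
begin

definition cycle_set :: "'a set \<Rightarrow> ('a \<Rightarrow> 'a \<Rightarrow> 'a) \<Rightarrow> bool" where
  "cycle_set S op \<longleftrightarrow>
     (\<forall>s\<in>S. bij_betw (op s) S S) \<and>
     (\<forall>s\<in>S. \<forall>t\<in>S. \<forall>u\<in>S. op (op s t) (op s u) = op (op t s) (op t u))"

definition psi :: "'a set \<Rightarrow> ('a \<Rightarrow> 'a \<Rightarrow> 'a) \<Rightarrow> 'a \<Rightarrow> ('a \<Rightarrow> 'a)" where
  "psi S op s = (\<lambda>t\<in>S. op s t)"

definition perm_group :: "'a set \<Rightarrow> ('a \<Rightarrow> 'a \<Rightarrow> 'a) \<Rightarrow> ('a \<Rightarrow> 'a) set" where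
  "perm_group S op = generate (BijGroup S) (psi S op ` S)"

definition sq_map :: "('a \<Rightarrow> 'a \<Rightarrow> 'a) \<Rightarrow> 'a \<Rightarrow> 'a" where
  "sq_map op s = op s s"

fun psik :: "'a set \<Rightarrow> ('a \<Rightarrow> 'a \<Rightarrow> 'a) \<Rightarrow> nat \<Rightarrow> 'a \<Rightarrow> ('a \<Rightarrow> 'a)" where
  "psik S op 0 s = (\<lambda>x\<in>S. x)"
| "psik S op (Suc k) s = compose S (psi S op ((sq_map op ^^ k) s)) (psik S op k s)"

definition is_class :: "'a set \<Rightarrow> ('a \<Rightarrow> 'a \<Rightarrow> 'a) \<Rightarrow> nat \<Rightarrow> bool" where
  "is_class S op d \<longleftrightarrow>
     d = (LEAST d. d \<ge> 1 \<and> (\<forall>s\<in>S. psik S op d s = (\<lambda>x\<in>S. x)))"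

end

theory Submission
  imports Defs "HOL-Algebra.Sylow" "HOL-Algebra.Multiplicative_Group"
begin

text \<open>
  For a list of letters let psi_sum [s1, ..., sn] be the permutation that applies
  psi(s1) and then, letter by letter, psi of the next letter moved by everything applied so far;
  thus psi_sum [s] = psi(s) and psi_k(s) = psi_sum (replicate k s).  The cycle set law says
  precisely that swapping two adjacent letters does not change psi_sum, so psi_sum only depends on
  the multiset of letters, and concatenation of lists induces a commutative monoid structure on its
  image, which is the permutation group G.  For finite S this monoid is a group (the additive group
  of the brace G), in which psi_k(s) is the k-th power of psi(s).  Hence the class d is the exponent
  of an abelian group of order |G|, and the exponent of a finite group has the same prime divisors
  as its order: it divides the order, and by Sylow every prime divisor of the order divides the
  order of some element.
\<close>

lemma (in group) finite_submonoid_is_subgroup: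
  assumes fin: "finite (carrier G)" and H: "submonoid H G"
  shows "subgroup H G"
proof (rule submonoid_subgroupI[OF H])
  fix a assume aH: "a \<in> H"
  have a: "a \<in> carrier G" using submonoid.mem_carrier[OF H aH] .
  have pow_closed: "a [^] k \<in> H" for k :: nat
    by (induction k) (simp_all add: submonoid.one_closed[OF H] submonoid.m_closed[OF H _ aH])
  have "Suc (order G - 1) = order G"
    using fin by (simp add: order_gt_0_iff_finite)
  then have "a [^] (order G - 1) \<otimes> a = \<one>"
    using nat_pow_Suc[of a "order G - 1"] pow_order_eq_1[OF a] by simp
  then have "inv a = a [^] (order G - 1)"
    using a by (intro inv_equality) simp_all
  then show "inv a \<in> H" using pow_closed by simp
qed

lemma (in comm_monoid) finite_cancel_imp_comm_group:
  assumes fin: "finite (carrier G)"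
    and cancel: "\<And>x y z. \<lbrakk>x \<in> carrier G; y \<in> carrier G; z \<in> carrier G; x \<otimes> z = y \<otimes> z\<rbrakk> \<Longrightarrow> x = y"
  shows "comm_group G"
proof (rule comm_groupI)
  fix z assume z: "z \<in> carrier G"
  have "inj_on (\<lambda>x. x \<otimes> z) (carrier G)"
    using z cancel by (intro inj_onI) blast
  moreover have "(\<lambda>x. x \<otimes> z) ` carrier G \<subseteq> carrier G" using z by auto
  ultimately have "(\<lambda>x. x \<otimes> z) ` carrier G = carrier G"
    using endo_inj_surj[OF fin] by blast
  then show "\<exists>y\<in>carrier G. y \<otimes> z = \<one>"
    by (metis (no_types, lifting) imageE one_closed)
qed (auto simp: m_ac)

lemma (in group) exponent_iff_Lcm_ord_dvd:
  "(\<forall>x\<in>carrier G. x [^] k = \<one>) \<longleftrightarrow> Lcm (ord ` carrier G) dvd k"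
  by (simp add: Lcm_dvd_iff pow_eq_id)

lemma (in group) Lcm_ord_pos:
  assumes "finite (carrier G)"
  shows "Lcm (ord ` carrier G) > 0"
proof -
  have "0 \<notin> ord ` carrier G" using ord_ge_1[OF assms] by fastforce
  then show ?thesis using Lcm_0_iff[OF finite_imageI[OF assms, of ord]] by simp
qed

lemma (in group) least_exponent_eq_Lcm_ord:
  assumes "finite (carrier G)"
  shows "(LEAST k. k \<ge> 1 \<and> (\<forall>x\<in>carrier G. x [^] k = \<one>)) = Lcm (ord ` carrier G)"
proof -
  have "Lcm (ord ` carrier G) \<noteq> 0"
    using Lcm_ord_pos[OF assms] by simp
  then show ?thesis
    unfolding exponent_iff_Lcm_ord_dvd
    by (intro Least_equality) (auto intro: dvd_imp_le)
qed

lemma (in group) exists_prime_dvd_ord: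
  assumes fin: "finite (carrier G)" and p: "prime p" and "p dvd order G"
  shows "\<exists>x\<in>carrier G. p dvd ord x"
proof -
  define a where "a = multiplicity p (order G)"
  have "order G \<noteq> 0" using fin by (simp add: order_gt_0_iff_finite)
  then obtain q where order: "order G = p ^ a * q"
    unfolding a_def using p multiplicity_decompose' by (metis not_prime_unit)
  have "a > 0" unfolding a_def using p assms(3) \<open>order G \<noteq> 0\<close>
    by (simp add: prime_multiplicity_gt_zero_iff prime_imp_prime_elem)
  obtain H where H: "subgroup H G" "card H = p ^ a"
    using sylow_thm[OF p is_group order fin] by blast
  have "card H \<noteq> 1"
    using H(2) \<open>a > 0\<close> prime_gt_1_nat[OF p] by simp
  then have "H \<noteq> {\<one>}" by auto
  then obtain x where xH: "x \<in> H" and "x \<noteq> \<one>"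
    using subgroup.one_closed[OF H(1)] by blast
  have x: "x \<in> carrier G" using subgroup.mem_carrier[OF H(1) xH] .
  interpret H: group "G\<lparr>carrier := H\<rparr>" by (rule subgroup.subgroup_is_group[OF H(1) is_group])
  have "x [^] (p ^ a) = \<one>"
    using H.pow_order_eq_1[of x] xH H(2) nat_pow_consistent[of x "p ^ a" H] by (simp add: order_def)
  then have "ord x dvd p ^ a" using pow_eq_id[OF x] by simp
  moreover have "ord x \<noteq> 1" using ord_eq_1[OF x] \<open>x \<noteq> \<one>\<close> by simp
  ultimately have "p dvd ord x"
    using divides_primepow_nat[OF p] by (metis power_0 dvd_power neq0_conv)
  then show ?thesis using x by blast
qed

lemma (in group) prime_dvd_Lcm_ord_iff:
  assumes "finite (carrier G)" and "prime p"
  shows "p dvd Lcm (ord ` carrier G) \<longleftrightarrow> p dvd order G"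
proof
  assume "p dvd Lcm (ord ` carrier G)"
  moreover have "Lcm (ord ` carrier G) dvd order G"
    using exponent_iff_Lcm_ord_dvd pow_order_eq_1 by blast
  ultimately show "p dvd order G" by (rule dvd_trans)
next
  assume "p dvd order G"
  then obtain x where "x \<in> carrier G" "p dvd ord x"
    using exists_prime_dvd_ord assms by blast
  then show "p dvd Lcm (ord ` carrier G)" by (meson dvd_Lcm dvd_trans imageI)
qed

lemma primepow_iff_prime_factors_singleton:
  fixes n :: nat
  assumes "n > 0"
  shows "primepow n \<longleftrightarrow> (\<exists>p. prime_factors n = {p})"
proof
  assume "primepow n"
  then obtain p k where "prime p" "k > 0" "n = p ^ k" by (auto simp: primepow_def)
  then have "prime_factors n = {p}"
    by (auto simp: prime_factors_dvd dest: prime_dvd_power primes_dvd_imp_eq)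
  then show "\<exists>p. prime_factors n = {p}" ..
next
  assume "\<exists>p. prime_factors n = {p}"
  then obtain p where p: "prime_factors n = {p}" by blast
  then have "n = p ^ multiplicity p n"
    using prod_prime_factors[of n] assms by simp
  moreover have "prime p" "multiplicity p n > 0"
    using p by (auto simp: prime_factors_multiplicity)
  ultimately show "primepow n" unfolding primepow_def by blast
qed

lemma primepow_iff_of_same_prime_divisors:
  fixes a b :: nat
  assumes "a > 0" "b > 0" and "\<And>p. prime p \<Longrightarrow> p dvd a \<longleftrightarrow> p dvd b"
  shows "primepow a \<longleftrightarrow> primepow b"
proof -
  have "prime_factors a = prime_factors b"
    using assms by (auto simp: prime_factors_dvd)
  then show ?thesis
    using assms(1,2) by (simp add: primepow_iff_prime_factors_singleton)
qed

lemma BijGroup_mult: "f \<in> Bij S \<Longrightarrow> g \<in> Bij S \<Longrightarrow> f \<otimes>\<^bsub>BijGroup S\<^esub> g = compose S f g"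
  by (simp add: BijGroup_def)

lemma BijGroup_one: "\<one>\<^bsub>BijGroup S\<^esub> = (\<lambda>x\<in>S. x)"
  by (simp add: BijGroup_def)

lemma compose_Bij_right_cancel:
  assumes "f \<in> Bij S" "f' \<in> Bij S" "g \<in> Bij S" and "compose S f g = compose S f' g"
  shows "f = f'"
  using group.right_cancel[OF group_BijGroup, of g S f f'] assms by (simp add: BijGroup_def)

lemma finite_Bij: "finite S \<Longrightarrow> finite (Bij S)"
proof (rule finite_subset)
  show "Bij S \<subseteq> S \<rightarrow>\<^sub>E S"
    using Bij_imp_funcset Bij_imp_extensional unfolding PiE_def by blast
qed (simp add: finite_PiE)

definition psi_sum :: "'a set \<Rightarrow> ('a \<Rightarrow> 'a \<Rightarrow> 'a) \<Rightarrow> 'a list \<Rightarrow> ('a \<Rightarrow> 'a)" where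
  "psi_sum S op = foldl (\<lambda>f s. compose S (psi S op (f s)) f) (\<lambda>x\<in>S. x)"

lemma psi_sum_Nil [simp]: "psi_sum S op [] = (\<lambda>x\<in>S. x)"
  by (simp add: psi_sum_def)

lemma psi_sum_snoc [simp]:
  "psi_sum S op (xs @ [s]) = compose S (psi S op (psi_sum S op xs s)) (psi_sum S op xs)"
  by (simp add: psi_sum_def)

lemma psi_sum_append_cong_left:
  "psi_sum S op xs = psi_sum S op ys \<Longrightarrow> psi_sum S op (xs @ zs) = psi_sum S op (ys @ zs)"
  by (simp add: psi_sum_def)

locale cycle_set_on =
  fixes S :: "'a set" and op :: "'a \<Rightarrow> 'a \<Rightarrow> 'a"
  assumes cycle_set: "cycle_set S op"
begin

lemma op_bij: "s \<in> S \<Longrightarrow> bij_betw (op s) S S"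
  using cycle_set unfolding cycle_set_def by blast

lemma cycle_law:
  "s \<in> S \<Longrightarrow> t \<in> S \<Longrightarrow> u \<in> S \<Longrightarrow> op (op s t) (op s u) = op (op t s) (op t u)"
  using cycle_set unfolding cycle_set_def by blast

lemma psi_in_Bij: "s \<in> S \<Longrightarrow> psi S op s \<in> Bij S"
  unfolding psi_def Bij_def using op_bij by simp

lemma psi_sum_in_Bij: "xs \<in> lists S \<Longrightarrow> psi_sum S op xs \<in> Bij S"
proof (induction xs rule: rev_induct)
  case (snoc s xs)
  then have "psi_sum S op xs s \<in> S" using Bij_imp_funcset by fastforce
  then show ?case using snoc by (simp add: compose_Bij psi_in_Bij)
qed (simp add: id_Bij)

lemma psi_sum_closed: "xs \<in> lists S \<Longrightarrow> x \<in> S \<Longrightarrow> psi_sum S op xs x \<in> S"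
  using psi_sum_in_Bij Bij_imp_funcset by blast

lemma psi_sum_extensional: "xs \<in> lists S \<Longrightarrow> psi_sum S op xs \<in> extensional S"
  using psi_sum_in_Bij Bij_imp_extensional by blast

lemma psi_sum_snoc_apply:
  "xs \<in> lists S \<Longrightarrow> x \<in> S \<Longrightarrow>
    psi_sum S op (xs @ [s]) x = op (psi_sum S op xs s) (psi_sum S op xs x)"
  by (simp add: compose_eq psi_def psi_sum_closed)

lemma psi_sum_singleton: "s \<in> S \<Longrightarrow> psi_sum S op [s] = psi S op s"
  using psi_sum_snoc[of S op "[]" s] psi_in_Bij[of s]
  by (simp add: compose_Id[OF Bij_imp_funcset Bij_imp_extensional])

lemma psi_sum_swap_last:
  assumes xs: "xs \<in> lists S" and "s \<in> S" "t \<in> S"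
  shows "psi_sum S op (xs @ [s, t]) = psi_sum S op (xs @ [t, s])"
proof (rule extensionalityI)
  show "psi_sum S op (xs @ [s, t]) \<in> extensional S" "psi_sum S op (xs @ [t, s]) \<in> extensional S"
    using assms by (simp_all add: psi_sum_extensional)
  fix x assume x: "x \<in> S"
  let ?g = "psi_sum S op xs"
  have two: "psi_sum S op (xs @ [a, b]) x = op (op (?g a) (?g b)) (op (?g a) (?g x))"
    if "a \<in> S" "b \<in> S" for a b
  proof -
    have "xs @ [a, b] = (xs @ [a]) @ [b]" by simp
    then show ?thesis
      using psi_sum_snoc_apply[of "xs @ [a]" x b] psi_sum_snoc_apply[of xs x a]
        psi_sum_snoc_apply[of xs b a] xs x that
      by simp
  qed
  show "psi_sum S op (xs @ [s, t]) x = psi_sum S op (xs @ [t, s]) x"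
    using two[of s t] two[of t s] assms x by (simp add: cycle_law psi_sum_closed)
qed

lemma psi_sum_swap:
  assumes "xs \<in> lists S" "s \<in> S" "t \<in> S"
  shows "psi_sum S op (xs @ s # t # ys) = psi_sum S op (xs @ t # s # ys)"
  using psi_sum_append_cong_left[OF psi_sum_swap_last[OF assms], of ys] by simp

lemma psi_sum_move_last:
  "xs \<in> lists S \<Longrightarrow> s \<in> S \<Longrightarrow> ys \<in> lists S \<Longrightarrow>
    psi_sum S op (xs @ s # ys) = psi_sum S op (xs @ ys @ [s])"
proof (induction ys arbitrary: xs)
  case (Cons t ys)
  have "psi_sum S op (xs @ s # t # ys) = psi_sum S op ((xs @ [t]) @ s # ys)"
    using psi_sum_swap Cons.prems by simp
  also have "\<dots> = psi_sum S op ((xs @ [t]) @ ys @ [s])"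
    using Cons.IH[of "xs @ [t]"] Cons.prems by simp
  finally show ?case by simp
qed simp

lemma psi_sum_mset_cong:
  "xs \<in> lists S \<Longrightarrow> mset xs = mset ys \<Longrightarrow> psi_sum S op xs = psi_sum S op ys"
proof (induction xs arbitrary: ys rule: rev_induct)
  case (snoc x xs)
  have "x \<in> set (xs @ [x])" by simp
  then have "x \<in> set ys" using mset_eq_setD[OF snoc.prems(2)] by blast
  then obtain ys1 ys2 where ys: "ys = ys1 @ x # ys2"
    by (blast dest: split_list)
  have "mset xs = mset (ys1 @ ys2)" using snoc.prems ys by simp
  then have "psi_sum S op (xs @ [x]) = psi_sum S op ((ys1 @ ys2) @ [x])"
    using snoc by (intro psi_sum_append_cong_left) simp
  moreover have "ys1 \<in> lists S" "ys2 \<in> lists S"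
    using mset_eq_setD[OF snoc.prems(2)] snoc.prems(1) ys by (auto simp: in_lists_conv_set)
  ultimately show ?case
    using psi_sum_move_last[of ys1 x ys2] snoc.prems ys by simp
qed simp

lemma psi_sum_append_commute:
  "xs \<in> lists S \<Longrightarrow> ys \<in> lists S \<Longrightarrow> psi_sum S op (xs @ ys) = psi_sum S op (ys @ xs)"
  by (rule psi_sum_mset_cong) simp_all

lemma psi_sum_append_cong_right:
  assumes "xs \<in> lists S" "ys \<in> lists S" "ys' \<in> lists S" "psi_sum S op ys = psi_sum S op ys'"
  shows "psi_sum S op (xs @ ys) = psi_sum S op (xs @ ys')"
  using psi_sum_append_commute psi_sum_append_cong_left assms by metis

lemma psi_sum_append:
  assumes xs: "xs \<in> lists S"
  shows "ys \<in> lists S \<Longrightarrow>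
    psi_sum S op (xs @ ys) = compose S (psi_sum S op (map (psi_sum S op xs) ys)) (psi_sum S op xs)"
proof (induction ys rule: rev_induct)
  case Nil
  then show ?case
    by (metis Id_compose Bij_imp_funcset Bij_imp_extensional psi_sum_in_Bij xs
        append_Nil2 list.simps(8) psi_sum_Nil)
next
  case (snoc y ys)
  let ?g = "psi_sum S op xs" and ?h = "psi_sum S op (map (psi_sum S op xs) ys)"
  have ys: "ys \<in> lists S" and y: "y \<in> S" using snoc.prems by auto
  have gys: "map ?g ys \<in> lists S" using ys psi_sum_closed[OF xs] by auto
  have "psi_sum S op (xs @ ys @ [y]) = compose S (psi S op (compose S ?h ?g y)) (compose S ?h ?g)"
    using psi_sum_snoc[of S op "xs @ ys" y] snoc.IH[OF ys] by simp
  also have "\<dots> = compose S (compose S (psi S op (?h (?g y))) ?h) ?g"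
    using psi_sum_closed[OF xs] psi_sum_closed[OF gys] psi_in_Bij Bij_imp_funcset y
    by (simp add: compose_eq compose_assoc)
  also have "\<dots> = compose S (psi_sum S op (map ?g (ys @ [y]))) ?g"
    by simp
  finally show ?case by simp
qed

lemma psi_sum_replicate_apply: "s \<in> S \<Longrightarrow> psi_sum S op (replicate k s) s = (sq_map op ^^ k) s"
proof (induction k)
  case (Suc k)
  have "replicate k s \<in> lists S" using Suc.prems by auto
  then show ?case
    using Suc psi_sum_closed[of "replicate k s" s]
    by (simp add: compose_eq psi_def sq_map_def flip: replicate_append_same)
qed simp

lemma psik_eq_psi_sum_replicate: "s \<in> S \<Longrightarrow> psik S op k s = psi_sum S op (replicate k s)"
  by (induction k) (simp_all add: psi_sum_replicate_apply flip: replicate_append_same)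

lemma psi_sums_compose_closed:
  assumes xs: "xs \<in> lists S" and ys: "ys \<in> lists S"
  shows "compose S (psi_sum S op ys) (psi_sum S op xs) \<in> psi_sum S op ` lists S"
proof -
  let ?g = "psi_sum S op xs"
  have g: "bij_betw ?g S S" using psi_sum_in_Bij[OF xs] by (simp add: Bij_def)
  define zs where "zs = map (inv_into S ?g) ys"
  have zs: "zs \<in> lists S" and "map ?g zs = ys"
    using ys g by (auto simp: zs_def bij_betw_def inv_into_into f_inv_into_f intro!: map_idI)
  then have "psi_sum S op (xs @ zs) = compose S (psi_sum S op ys) ?g"
    using psi_sum_append[OF xs zs] by simp
  then show ?thesis using xs zs by (metis append_in_lists_conv image_eqI)
qed

lemma psi_sum_in_perm_group: "xs \<in> lists S \<Longrightarrow> psi_sum S op xs \<in> perm_group S op"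
proof (induction xs rule: rev_induct)
  case Nil
  have "psi_sum S op [] = \<one>\<^bsub>BijGroup S\<^esub>" by (simp add: BijGroup_one)
  then show ?case unfolding perm_group_def by (simp only: generate.one)
next
  case (snoc s xs)
  then have xs: "xs \<in> lists S" and s: "s \<in> S" by auto
  have "psi S op (psi_sum S op xs s) \<in> psi S op ` S"
    using psi_sum_closed[OF xs s] by simp
  then have "psi S op (psi_sum S op xs s) \<otimes>\<^bsub>BijGroup S\<^esub> psi_sum S op xs \<in> perm_group S op"
    using snoc.IH[OF xs] unfolding perm_group_def by (rule generate.eng[OF generate.incl])
  moreover have "psi_sum S op (xs @ [s]) = psi S op (psi_sum S op xs s) \<otimes>\<^bsub>BijGroup S\<^esub> psi_sum S op xs"
    using psi_in_Bij[OF psi_sum_closed[OF xs s]] psi_sum_in_Bij[OF xs] by (simp add: BijGroup_mult)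
  ultimately show ?case by simp
qed

definition sum_group :: "('a \<Rightarrow> 'a) monoid" where
  "sum_group =
    \<lparr>carrier = psi_sum S op ` lists S,
     monoid.mult = (\<lambda>u v. psi_sum S op (inv_into (lists S) (psi_sum S op) u @
                                        inv_into (lists S) (psi_sum S op) v)),
     one = psi_sum S op []\<rparr>"

lemma carrier_sum_group: "carrier sum_group = psi_sum S op ` lists S"
  by (simp add: sum_group_def)

lemma one_sum_group: "\<one>\<^bsub>sum_group\<^esub> = psi_sum S op []"
  by (simp add: sum_group_def)

lemma sum_group_mult:
  assumes "xs \<in> lists S" "ys \<in> lists S"
  shows "psi_sum S op xs \<otimes>\<^bsub>sum_group\<^esub> psi_sum S op ys = psi_sum S op (xs @ ys)"
proof -
  define rep where "rep = inv_into (lists S) (psi_sum S op)"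
  have rep: "rep (psi_sum S op zs) \<in> lists S" "psi_sum S op (rep (psi_sum S op zs)) = psi_sum S op zs"
    if "zs \<in> lists S" for zs
  proof -
    have "psi_sum S op zs \<in> psi_sum S op ` lists S" using that by (rule imageI)
    then show "rep (psi_sum S op zs) \<in> lists S" "psi_sum S op (rep (psi_sum S op zs)) = psi_sum S op zs"
      unfolding rep_def by (rule inv_into_into, rule f_inv_into_f)
  qed
  have "psi_sum S op xs \<otimes>\<^bsub>sum_group\<^esub> psi_sum S op ys
      = psi_sum S op (rep (psi_sum S op xs) @ rep (psi_sum S op ys))"
    by (simp add: sum_group_def rep_def)
  also have "\<dots> = psi_sum S op (xs @ rep (psi_sum S op ys))"
    using rep assms by (intro psi_sum_append_cong_left) simp
  also have "\<dots> = psi_sum S op (xs @ ys)"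
    using rep assms by (intro psi_sum_append_cong_right) simp_all
  finally show ?thesis .
qed

lemma psi_sum_in_carrier: "xs \<in> lists S \<Longrightarrow> psi_sum S op xs \<in> carrier sum_group"
  by (simp add: carrier_sum_group)

lemma comm_monoid_sum_group: "comm_monoid sum_group"
proof (rule comm_monoidI)
  show "\<one>\<^bsub>sum_group\<^esub> \<in> carrier sum_group"
    using psi_sum_in_carrier[of "[]"] by (simp add: one_sum_group del: psi_sum_Nil)
next
  fix u v assume "u \<in> carrier sum_group" "v \<in> carrier sum_group"
  then obtain xs ys where "xs \<in> lists S" "ys \<in> lists S" "u = psi_sum S op xs" "v = psi_sum S op ys"
    unfolding carrier_sum_group by blast
  then show "u \<otimes>\<^bsub>sum_group\<^esub> v \<in> carrier sum_group"
    and "u \<otimes>\<^bsub>sum_group\<^esub> v = v \<otimes>\<^bsub>sum_group\<^esub> u"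
    by (simp_all add: sum_group_mult psi_sum_in_carrier psi_sum_append_commute)
next
  fix u v w assume "u \<in> carrier sum_group" "v \<in> carrier sum_group" "w \<in> carrier sum_group"
  then obtain xs ys zs where "xs \<in> lists S" "ys \<in> lists S" "zs \<in> lists S"
    and "u = psi_sum S op xs" "v = psi_sum S op ys" "w = psi_sum S op zs"
    unfolding carrier_sum_group by blast
  then show "u \<otimes>\<^bsub>sum_group\<^esub> v \<otimes>\<^bsub>sum_group\<^esub> w = u \<otimes>\<^bsub>sum_group\<^esub> (v \<otimes>\<^bsub>sum_group\<^esub> w)"
    by (simp add: sum_group_mult)
next
  fix u assume "u \<in> carrier sum_group"
  then obtain xs where "xs \<in> lists S" "u = psi_sum S op xs"
    unfolding carrier_sum_group by blast
  then show "\<one>\<^bsub>sum_group\<^esub> \<otimes>\<^bsub>sum_group\<^esub> u = u"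
    using sum_group_mult[of "[]" xs] by (simp add: one_sum_group del: psi_sum_Nil)
qed

lemma sum_group_pow_psi: "s \<in> S \<Longrightarrow> psi S op s [^]\<^bsub>sum_group\<^esub> k = psik S op k s"
proof (induction k)
  case (Suc k)
  have "psi S op s [^]\<^bsub>sum_group\<^esub> Suc k
      = psi_sum S op (replicate k s) \<otimes>\<^bsub>sum_group\<^esub> psi_sum S op [s]"
    using Suc by (simp add: psik_eq_psi_sum_replicate psi_sum_singleton)
  also have "\<dots> = psi_sum S op (replicate k s @ [s])"
    using Suc.prems by (intro sum_group_mult) auto
  also have "\<dots> = psik S op (Suc k) s"
    using Suc.prems by (simp only: psik_eq_psi_sum_replicate replicate_append_same replicate_Suc)
  finally show ?case .
qed (simp add: one_sum_group)

lemma sum_group_exponent_iff: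
  "(\<forall>u\<in>carrier sum_group. u [^]\<^bsub>sum_group\<^esub> k = \<one>\<^bsub>sum_group\<^esub>) \<longleftrightarrow>
    (\<forall>s\<in>S. psik S op k s = (\<lambda>x\<in>S. x))"
proof
  assume exponent: "\<forall>u\<in>carrier sum_group. u [^]\<^bsub>sum_group\<^esub> k = \<one>\<^bsub>sum_group\<^esub>"
  show "\<forall>s\<in>S. psik S op k s = (\<lambda>x\<in>S. x)"
  proof
    fix s assume s: "s \<in> S"
    then have "psi S op s \<in> carrier sum_group"
      using psi_sum_in_carrier[of "[s]"] by (simp add: psi_sum_singleton)
    then have "psi S op s [^]\<^bsub>sum_group\<^esub> k = \<one>\<^bsub>sum_group\<^esub>"
      using exponent by blast
    then show "psik S op k s = (\<lambda>x\<in>S. x)"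
      by (simp add: sum_group_pow_psi[OF s] one_sum_group)
  qed
next
  assume psik: "\<forall>s\<in>S. psik S op k s = (\<lambda>x\<in>S. x)"
  interpret comm_monoid sum_group by (rule comm_monoid_sum_group)
  have "psi_sum S op xs [^]\<^bsub>sum_group\<^esub> k = \<one>\<^bsub>sum_group\<^esub>" if "xs \<in> lists S" for xs
    using that
  proof (induction xs)
    case (Cons s xs)
    then have s: "s \<in> S" and xs: "xs \<in> lists S" by auto
    have "psi_sum S op (s # xs) = psi S op s \<otimes>\<^bsub>sum_group\<^esub> psi_sum S op xs"
      using sum_group_mult[of "[s]" xs] s xs by (simp add: psi_sum_singleton)
    moreover have "psi S op s \<in> carrier sum_group"
      using psi_sum_in_carrier[of "[s]"] s by (simp add: psi_sum_singleton)
    moreover have "psi S op s [^]\<^bsub>sum_group\<^esub> k = \<one>\<^bsub>sum_group\<^esub>"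
      using psik s by (simp add: sum_group_pow_psi one_sum_group)
    ultimately show ?case
      using Cons.IH xs psi_sum_in_carrier[OF xs] by (simp add: pow_mult_distrib m_comm)
  qed (simp only: one_sum_group[symmetric] nat_pow_one)
  then show "\<forall>u\<in>carrier sum_group. u [^]\<^bsub>sum_group\<^esub> k = \<one>\<^bsub>sum_group\<^esub>"
    unfolding carrier_sum_group by blast
qed

end

locale finite_cycle_set = cycle_set_on +
  assumes finite_S: "finite S"
begin

lemma subgroup_psi_sums: "subgroup (psi_sum S op ` lists S) (BijGroup S)"
proof (rule group.finite_submonoid_is_subgroup[OF group_BijGroup])
  show "finite (carrier (BijGroup S))"
    using finite_S by (simp add: BijGroup_def finite_Bij)
  show "submonoid (psi_sum S op ` lists S) (BijGroup S)"
  proof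
    show "psi_sum S op ` lists S \<subseteq> carrier (BijGroup S)"
      using psi_sum_in_Bij by (auto simp: BijGroup_def)
    have "psi_sum S op [] \<in> psi_sum S op ` lists S" by blast
    then show "\<one>\<^bsub>BijGroup S\<^esub> \<in> psi_sum S op ` lists S"
      by (simp only: BijGroup_one psi_sum_Nil)
  next
    fix u v assume "u \<in> psi_sum S op ` lists S" "v \<in> psi_sum S op ` lists S"
    then obtain xs ys where "xs \<in> lists S" "u = psi_sum S op xs" "ys \<in> lists S" "v = psi_sum S op ys"
      by blast
    then show "u \<otimes>\<^bsub>BijGroup S\<^esub> v \<in> psi_sum S op ` lists S"
      using psi_sums_compose_closed psi_sum_in_Bij by (simp add: BijGroup_mult)
  qed
qed

lemma perm_group_eq_psi_sums: "perm_group S op = psi_sum S op ` lists S"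
proof
  show "perm_group S op \<subseteq> psi_sum S op ` lists S"
    unfolding perm_group_def
  proof (intro group.generate_subgroup_incl[OF group_BijGroup] subgroup_psi_sums subsetI)
    fix u assume "u \<in> psi S op ` S"
    then obtain s where "s \<in> S" "u = psi S op s" by blast
    then show "u \<in> psi_sum S op ` lists S"
      by (intro image_eqI[of _ _ "[s]"]) (simp_all add: psi_sum_singleton)
  qed
qed (use psi_sum_in_perm_group in blast)

lemma finite_carrier_sum_group: "finite (carrier sum_group)"
proof (rule finite_subset)
  show "carrier sum_group \<subseteq> Bij S"
    unfolding carrier_sum_group using psi_sum_in_Bij by blast
qed (rule finite_Bij[OF finite_S])

lemma order_sum_group: "order sum_group = card (perm_group S op)"
  by (simp add: order_def carrier_sum_group perm_group_eq_psi_sums)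

lemma psi_sum_inverse_exists:
  assumes "xs \<in> lists S"
  obtains zs where "zs \<in> lists S" "\<And>x. x \<in> S \<Longrightarrow> psi_sum S op zs (psi_sum S op xs x) = x"
proof -
  let ?g = "psi_sum S op xs"
  have g: "?g \<in> Bij S" using assms by (rule psi_sum_in_Bij)
  have "inv\<^bsub>BijGroup S\<^esub> ?g \<in> psi_sum S op ` lists S"
    using subgroup.m_inv_closed[OF subgroup_psi_sums] assms by blast
  then obtain zs where "zs \<in> lists S" "psi_sum S op zs = (\<lambda>x\<in>S. inv_into S ?g x)"
    using inv_BijGroup[OF g] by (metis imageE)
  moreover have "inv_into S ?g (?g x) = x" if "x \<in> S" for x
    using g that by (simp add: Bij_def bij_betw_def inv_into_f_f)
  ultimately show ?thesis
    using that psi_sum_closed[OF assms] by simp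
qed

lemma psi_sum_map_cancel:
  assumes xs: "xs \<in> lists S" and ys: "ys \<in> lists S" and ys': "ys' \<in> lists S"
    and eq: "psi_sum S op (map (psi_sum S op xs) ys) = psi_sum S op (map (psi_sum S op xs) ys')"
  shows "psi_sum S op ys = psi_sum S op ys'"
proof -
  let ?g = "psi_sum S op xs"
  obtain zs where zs: "zs \<in> lists S" and inverse: "\<And>x. x \<in> S \<Longrightarrow> psi_sum S op zs (?g x) = x"
    using psi_sum_inverse_exists[OF xs] by blast
  have g_lists: "map ?g ws \<in> lists S" if "ws \<in> lists S" for ws
    using that psi_sum_closed[OF xs] by auto
  have undo: "psi_sum S op (zs @ map ?g ws) = compose S (psi_sum S op ws) (psi_sum S op zs)"
    if "ws \<in> lists S" for ws
  proof -
    have "map (psi_sum S op zs) (map ?g ws) = ws"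
      using that inverse by (induction ws) auto
    then show ?thesis using psi_sum_append[OF zs g_lists[OF that]] by simp
  qed
  have "psi_sum S op (zs @ map ?g ys) = psi_sum S op (zs @ map ?g ys')"
    using zs g_lists ys ys' eq by (intro psi_sum_append_cong_right)
  then have "compose S (psi_sum S op ys) (psi_sum S op zs) = compose S (psi_sum S op ys') (psi_sum S op zs)"
    using undo[OF ys] undo[OF ys'] by simp
  then show ?thesis
    by (rule compose_Bij_right_cancel[OF psi_sum_in_Bij[OF ys] psi_sum_in_Bij[OF ys'] psi_sum_in_Bij[OF zs]])
qed

lemma psi_sum_append_cancel:
  assumes xs: "xs \<in> lists S" and ys: "ys \<in> lists S" and ys': "ys' \<in> lists S"
    and eq: "psi_sum S op (xs @ ys) = psi_sum S op (xs @ ys')"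
  shows "psi_sum S op ys = psi_sum S op ys'"
proof (rule psi_sum_map_cancel[OF xs ys ys'])
  let ?g = "psi_sum S op xs"
  have lists: "map ?g ys \<in> lists S" "map ?g ys' \<in> lists S"
    using ys ys' psi_sum_closed[OF xs] by auto
  have "compose S (psi_sum S op (map ?g ys)) ?g = compose S (psi_sum S op (map ?g ys')) ?g"
    using eq psi_sum_append[OF xs ys] psi_sum_append[OF xs ys'] by simp
  then show "psi_sum S op (map ?g ys) = psi_sum S op (map ?g ys')"
    by (rule compose_Bij_right_cancel[OF psi_sum_in_Bij[OF lists(1)] psi_sum_in_Bij[OF lists(2)]
          psi_sum_in_Bij[OF xs]])
qed

lemma comm_group_sum_group: "comm_group sum_group"
proof -
  interpret comm_monoid sum_group by (rule comm_monoid_sum_group)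
  show ?thesis
  proof (rule finite_cancel_imp_comm_group[OF finite_carrier_sum_group])
    fix u v w
    assume "u \<in> carrier sum_group" "v \<in> carrier sum_group" "w \<in> carrier sum_group"
    then obtain xs ys zs where lists: "xs \<in> lists S" "ys \<in> lists S" "zs \<in> lists S"
      and "u = psi_sum S op xs" "v = psi_sum S op ys" "w = psi_sum S op zs"
      unfolding carrier_sum_group by blast
    moreover assume "u \<otimes>\<^bsub>sum_group\<^esub> w = v \<otimes>\<^bsub>sum_group\<^esub> w"
    ultimately have "psi_sum S op (zs @ xs) = psi_sum S op (zs @ ys)"
      by (simp add: sum_group_mult psi_sum_append_commute)
    with lists show "u = v" using psi_sum_append_cancel \<open>u = _\<close> \<open>v = _\<close> by blast
  qed
qed

lemma class_eq_Lcm_ord: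
  assumes "is_class S op d"
  shows "d = Lcm (group.ord sum_group ` carrier sum_group)"
proof -
  interpret comm_group sum_group by (rule comm_group_sum_group)
  have "d = (LEAST k. k \<ge> 1 \<and> (\<forall>u\<in>carrier sum_group. u [^]\<^bsub>sum_group\<^esub> k = \<one>\<^bsub>sum_group\<^esub>))"
    using assms unfolding is_class_def sum_group_exponent_iff .
  then show ?thesis
    using least_exponent_eq_Lcm_ord[OF finite_carrier_sum_group] by simp
qed

end

theorem mainTheorem6:
  fixes S :: "'a set" and op :: "'a \<Rightarrow> 'a \<Rightarrow> 'a" and d :: nat
  assumes "finite S" and "cycle_set S op" and "is_class S op d"
  shows "(\<forall>p::nat. prime p \<longrightarrow> (p dvd d \<longleftrightarrow> p dvd card (perm_group S op)))
       \<and> (primepow d \<longleftrightarrow> primepow (card (perm_group S op)))"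
proof -
  interpret finite_cycle_set S op
    using assms by (simp add: finite_cycle_set_def finite_cycle_set_axioms_def cycle_set_on_def)
  interpret A: comm_group sum_group by (rule comm_group_sum_group)
  have d: "d = Lcm (A.ord ` carrier sum_group)"
    using assms(3) by (rule class_eq_Lcm_ord)
  have same_primes: "p dvd d \<longleftrightarrow> p dvd card (perm_group S op)" if "prime p" for p :: nat
    using A.prime_dvd_Lcm_ord_iff[OF finite_carrier_sum_group that] d order_sum_group by simp
  have pos: "d > 0" "card (perm_group S op) > 0"
    using d A.Lcm_ord_pos A.order_gt_0_iff_finite finite_carrier_sum_group order_sum_group
    by simp_all
  show ?thesis
    using same_primes primepow_iff_of_same_prime_divisors[OF pos same_primes] by simp
qed

end
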